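(* Let $n\ge2$, $m=0$ and $k$ generic. The space of dimension-two fields of zero momentum (normal-ordered differential polynomials in $\partial\varphi$ of conformal weight 2) commuting with the screenings $E_i$ ($1\le i\le n-1$) and $\Psi$ is three-dimensional. It is spanned by $:\mathcal{H}\mathcal{H}:$, $\partial\mathcal{H}$ (with $\mathcal{H}=\mathcal{H}^{(k)}_{n[0]}$) and the field $$\mathcal{T}^{(k)}_n=\frac12\sum_{i,j\in\{n-1,\dots,1,+,*\}}(\Gamma_n(k)^{-1})_{ij}:A_iA_j:+\sum_{i=1}^{n-1}(n-i)\frac{(i-1)(k+n-1)-1}{2(k+n)}\partial A_i-\frac n2\partial A_+,$$ where $A_+=Q$, $A_*=Y$ and $\Gamma_n(k)$ is the Gram matrix of $(a_{n-1},\dots,a_1,\psi,\xi)$ in this order (rows/columns indexed by $n-1,\dots,1,+,*$). The field $\mathcal{T}^{(k)}_n$ is a Virasoro energy-momentum tensor with central charge $$c_n(k)=-\frac{\big((k+n)(n-1)-n\big)\big((k+n)(n-2)n-n^2+1\big)}{k+n}.$$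
   Context: Setup for $m=0$: fix $n\ge2$, generic $k\in\mathbb{C}$ ($k\ne -n$), $K=k+n$. Let $\varphi=(\varphi_1,\dots,\varphi_{n+1})$ be free scalar fields with $\partial\varphi_i(z)\partial\varphi_j(w)\sim\delta_{ij}(z-w)^{-2}$ and $(\,,\,)$ the standard bilinear form on $\mathbb{C}^{n+1}$. Choose $a_{n-1},\dots,a_1,\psi,\xi\in\mathbb{C}^{n+1}$ with nonzero products $(a_i,a_i)=2K$, $(a_i,a_{i+1})=-K$ ($1\le i\le n-2$), $(a_1,\psi)=-K$, $(\psi,\psi)=1$, $(\psi,\xi)=1$, all other products (including $(\xi,\xi)$, $(a_i,\xi)$) zero. Currents: $A_i=(a_i,\partial\varphi)$, $Q=(\psi,\partial\varphi)$, $Y=(\xi,\partial\varphi)$. Screenings $E_i=\oint e^{(a_i,\varphi)}$, $\Psi=\oint e^{(\psi,\varphi)}$; a field $X(w)$ commutes with $\oint s$ if the residue at $z=w$ of $s(z)X(w)$ vanishes. $\mathcal{H}^{(k)}_{n[0]}=\ell_n(k)Y+\sum_{i=1}^{n-1}\frac{n-i}{n}A_i+Q$ with $\ell_n(k)=\frac{n-1}{n}k+n-2$. *)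

theory Defs
  imports Complex_Main "HOL-Library.Cardinality" "Jordan_Normal_Form.Gauss_Jordan_Elimination"
begin

text \<open>
  The index type 'd (finite, of cardinality n+1) labels the
  free fields phi_1, ..., phi_(n+1); a vector of C^(n+1) is a function 'd => complex,
  and the current (x, d phi) is written h(x) below (d = derivative).
\<close>
definition bil :: "('d::finite \<Rightarrow> complex) \<Rightarrow> ('d \<Rightarrow> complex) \<Rightarrow> complex" where
  "bil x y = (\<Sum>i\<in>UNIV. x i * y i)"

text \<open>
  Zero-momentum fields of conformal weight 2.  A basis of the normal-ordered
  differential polynomials in d phi of weight 2 is given by
  :d phi_a d phi_b: (a, b unordered) and d^2 phi_a.  The field
  Fld2 S v  (S symmetric) stands for
     1/2 * sum_(a,b) S a b :d phi_a d phi_b:  +  sum_a v a d^2 phi_a .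
  This representation is bijective on the weight-2 space when S is symmetric.
\<close>
datatype 'd fld2 = Fld2 (qf: "'d \<Rightarrow> 'd \<Rightarrow> complex") (df: "'d \<Rightarrow> complex")

definition weight2_fields :: "'d fld2 set" where
  "weight2_fields = {X. \<forall>a b. qf X a b = qf X b a}"

definition fld_zero :: "'d fld2" where
  "fld_zero = Fld2 (\<lambda>_ _. 0) (\<lambda>_. 0)"

definition fld_add :: "'d fld2 \<Rightarrow> 'd fld2 \<Rightarrow> 'd fld2" where
  "fld_add X Y = Fld2 (\<lambda>a b. qf X a b + qf Y a b) (\<lambda>a. df X a + df Y a)"

definition fld_scale :: "complex \<Rightarrow> 'd fld2 \<Rightarrow> 'd fld2" where
  "fld_scale c X = Fld2 (\<lambda>a b. c * qf X a b) (\<lambda>a. c * df X a)"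

text \<open>The field :(x, d phi)(y, d phi): .\<close>
definition fld_quad :: "('d \<Rightarrow> complex) \<Rightarrow> ('d \<Rightarrow> complex) \<Rightarrow> 'd fld2" where
  "fld_quad x y = Fld2 (\<lambda>a b. x a * y b + y a * x b) (\<lambda>_. 0)"

text \<open>The field d (x, d phi) = (x, d^2 phi).\<close>
definition fld_deriv :: "('d \<Rightarrow> complex) \<Rightarrow> 'd fld2" where
  "fld_deriv x = Fld2 (\<lambda>_ _. 0) x"

text \<open>
  Commutation with the screening operator  oint e^((alpha, phi)) .
  By Wick's theorem, for X = Fld2 S v the residue at z = w of
  e^((alpha,phi))(z) X(w) equals
     ( (1/2 alpha^T S alpha - (v, alpha)) (alpha, d phi) - (S alpha, d phi) ) e^((alpha,phi))(w)
  (with the usual Wick product), which vanishes iff the following holds.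
\<close>
definition commutes_screening :: "('d::finite \<Rightarrow> complex) \<Rightarrow> 'd fld2 \<Rightarrow> bool" where
  "commutes_screening \<alpha> X \<longleftrightarrow>
     (\<forall>a. (\<Sum>b\<in>UNIV. qf X a b * \<alpha> b)
          = ((1/2) * (\<Sum>c\<in>UNIV. \<Sum>b\<in>UNIV. \<alpha> c * qf X c b * \<alpha> b) - bil (df X) \<alpha>) * \<alpha> a)"

text \<open>
  Weight-3 fields of zero momentum: Fld3 P w stands for
     sum_(a,b) P a b :d^2 phi_a d phi_b:  +  sum_a w a d^3 phi_a   (a basis).
\<close>
datatype 'd fld3 = Fld3 (qf3: "'d \<Rightarrow> 'd \<Rightarrow> complex") (df3: "'d \<Rightarrow> complex")

text \<open>
  The lambda-bracket (OPE) of two weight-2 fields X = Fld2 S v, Y = Fld2 R u: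
    [X_lambda Y] = lambda^3 * c3 + lambda^2 * (w, d phi) + lambda * Z2 + Z3
  i.e. X(z)Y(w) ~ 6 c3/(z-w)^4 + 2(w,d phi)/(z-w)^3 + Z2/(z-w)^2 + Z3/(z-w),
  computed by Wick's theorem:
    c3 = tr(SR)/12 - (u, v),  w = S u - R v,
    Z2 = :(d phi)^T S R (d phi): + 2 (S u, d^2 phi),
    Z3 = :(d^2 phi)^T S R (d phi): + (S u, d^3 phi).
\<close>
record 'd lbracket =
  lb3 :: complex
  lb2 :: "'d \<Rightarrow> complex"
  lb1 :: "'d fld2"
  lb0 :: "'d fld3"

definition mprod :: "('d::finite \<Rightarrow> 'd \<Rightarrow> complex) \<Rightarrow> ('d \<Rightarrow> 'd \<Rightarrow> complex) \<Rightarrow> 'd \<Rightarrow> 'd \<Rightarrow> complex" where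
  "mprod S R = (\<lambda>a b. \<Sum>c\<in>UNIV. S a c * R c b)"

definition mvec :: "('d::finite \<Rightarrow> 'd \<Rightarrow> complex) \<Rightarrow> ('d \<Rightarrow> complex) \<Rightarrow> 'd \<Rightarrow> complex" where
  "mvec S u = (\<lambda>a. \<Sum>c\<in>UNIV. S a c * u c)"

definition lambda_bracket :: "'d::finite fld2 \<Rightarrow> 'd fld2 \<Rightarrow> 'd lbracket" where
  "lambda_bracket X Y =
     (let S = qf X; v = df X; R = qf Y; u = df Y; SR = mprod S R in
      \<lparr> lb3 = (\<Sum>a\<in>UNIV. SR a a) / 12 - bil u v,
        lb2 = (\<lambda>a. mvec S u a - mvec R v a),
        lb1 = Fld2 (\<lambda>a b. SR a b + SR b a) (\<lambda>a. 2 * mvec S u a),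
        lb0 = Fld3 SR (mvec S u) \<rparr>)"

text \<open>
  Virasoro field with central charge c:
  T(z)T(w) ~ (c/2)/(z-w)^4 + 2T(w)/(z-w)^2 + dT(w)/(z-w), i.e.
  [T_lambda T] = (d + 2 lambda) T + c/12 lambda^3.  Here
  d(1/2 :(d phi)^T S (d phi): + (v, d^2 phi)) = :(d^2 phi)^T S (d phi): + (v, d^3 phi).
\<close>
definition is_virasoro :: "'d::finite fld2 \<Rightarrow> complex \<Rightarrow> bool" where
  "is_virasoro T c \<longleftrightarrow>
     lambda_bracket T T =
       \<lparr> lb3 = c / 12, lb2 = (\<lambda>_. 0), lb1 = fld_scale 2 T, lb0 = Fld3 (qf T) (df T) \<rparr>"

text \<open>
  The ordered list of vectors (a_(n-1), ..., a_1, psi, xi), indexed 0..n,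
  and its Gram matrix Gamma_n(k) (a Jordan_Normal_Form matrix).
\<close>
definition gram_basis ::
  "nat \<Rightarrow> (nat \<Rightarrow> 'd \<Rightarrow> complex) \<Rightarrow> ('d \<Rightarrow> complex) \<Rightarrow> ('d \<Rightarrow> complex) \<Rightarrow> nat \<Rightarrow> 'd \<Rightarrow> complex" where
  "gram_basis n a \<psi> \<xi> j = (if j < n - 1 then a (n - 1 - j) else if j = n - 1 then \<psi> else \<xi>)"

definition gram_mat ::
  "nat \<Rightarrow> (nat \<Rightarrow> 'd::finite \<Rightarrow> complex) \<Rightarrow> ('d \<Rightarrow> complex) \<Rightarrow> ('d \<Rightarrow> complex) \<Rightarrow> complex mat" where
  "gram_mat n a \<psi> \<xi> = mat (n + 1) (n + 1)
     (\<lambda>(i, j). bil (gram_basis n a \<psi> \<xi> i) (gram_basis n a \<psi> \<xi> j))"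

definition ell :: "nat \<Rightarrow> complex \<Rightarrow> complex" where
  "ell n k = (of_nat n - 1) / of_nat n * k + of_nat n - 2"

definition hvec ::
  "nat \<Rightarrow> complex \<Rightarrow> (nat \<Rightarrow> 'd \<Rightarrow> complex) \<Rightarrow> ('d \<Rightarrow> complex) \<Rightarrow> ('d \<Rightarrow> complex) \<Rightarrow> 'd \<Rightarrow> complex" where
  "hvec n k a \<psi> \<xi> = (\<lambda>d. ell n k * \<xi> d + (\<Sum>i=1..n-1. (of_nat n - of_nat i) / of_nat n * a i d) + \<psi> d)"

definition Tfield ::
  "nat \<Rightarrow> complex \<Rightarrow> (nat \<Rightarrow> 'd::finite \<Rightarrow> complex) \<Rightarrow> ('d \<Rightarrow> complex) \<Rightarrow> ('d \<Rightarrow> complex) \<Rightarrow> 'd fld2" where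
  "Tfield n k a \<psi> \<xi> =
     (let Gi = the (mat_inverse (gram_mat n a \<psi> \<xi>)); b = gram_basis n a \<psi> \<xi> in
      fld_add
        (Fld2 (\<lambda>x y. (\<Sum>i\<le>n. \<Sum>j\<le>n. (1/2) * Gi $$ (i, j) * (b i x * b j y + b j x * b i y))) (\<lambda>_. 0))
        (fld_deriv (\<lambda>d. (\<Sum>i=1..n-1.
              (of_nat n - of_nat i) * ((of_nat i - 1) * (k + of_nat n - 1) - 1) / (2 * (k + of_nat n)) * a i d)
            - of_nat n / 2 * \<psi> d)))"

definition central_charge :: "nat \<Rightarrow> complex \<Rightarrow> complex" where
  "central_charge n k =
     - (((k + of_nat n) * (of_nat n - 1) - of_nat n) * ((k + of_nat n) * (of_nat n - 2) * of_nat n - of_nat n ^ 2 + 1))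
       / (k + of_nat n)"

definition screening_data ::
  "nat \<Rightarrow> complex \<Rightarrow> (nat \<Rightarrow> 'd::finite \<Rightarrow> complex) \<Rightarrow> ('d \<Rightarrow> complex) \<Rightarrow> ('d \<Rightarrow> complex) \<Rightarrow> bool" where
  "screening_data n k a \<psi> \<xi> \<longleftrightarrow>
     (let K = k + of_nat n in
       (\<forall>i\<in>{1..n-1}. \<forall>j\<in>{1..n-1}.
          bil (a i) (a j) = (if i = j then 2 * K else if i + 1 = j \<or> j + 1 = i then - K else 0))
     \<and> (\<forall>i\<in>{1..n-1}. bil (a i) \<psi> = (if i = 1 then - K else 0))
     \<and> (\<forall>i\<in>{1..n-1}. bil (a i) \<xi> = 0)
     \<and> bil \<psi> \<psi> = 1 \<and> bil \<psi> \<xi> = 1 \<and> bil \<xi> \<xi> = 0)"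

end

theory Submission
  imports Defs "Jordan_Normal_Form.Determinant"
begin

(*
  For X = Fld2 S v, commuting with the screening of alpha means S alpha = l alpha and
  (v, alpha) = l ((alpha, alpha)/2 - 1) for a single number l.  Since S is symmetric,
  screenings with nonzero inner product share l, and psi, a_1, ..., a_(n-1) form such a chain.
  For K /= 0 the Gram matrix of (a_(n-1), ..., a_1, psi, xi) is invertible, so the vectors
  orthogonal to all screenings are the multiples of H, the dual vector of xi.  Hence
  S = l 1 + mu H H^T and v = l t + c H, where t is the vector with (t, alpha) = (alpha, alpha)/2 - 1
  on every screening.  The Gram-inverse part of T is the identity form, so T = Fld2 1 t, a free
  boson with background charge, whose lambda-bracket gives central charge n + 1 - 12 (t, t).
*)

lemma bil_comm: "bil x y = bil y x"
  unfolding bil_def by (simp add: mult.commute)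

lemma bil_add_left: "bil (\<lambda>d. x d + y d) z = bil x z + bil y z"
  unfolding bil_def by (simp add: distrib_right sum.distrib)

lemma bil_diff_left: "bil (\<lambda>d. x d - y d) z = bil x z - bil y z"
  unfolding bil_def by (simp add: left_diff_distrib sum_subtractf)

lemma bil_scale_left: "bil (\<lambda>d. c * x d) z = c * bil x z"
  unfolding bil_def by (simp add: sum_distrib_left mult.assoc)

lemma bil_scale_right: "bil x (\<lambda>d. c * y d) = c * bil x y"
  by (simp add: bil_comm[of x] bil_scale_left)

lemma bil_sum_left: "bil (\<lambda>d. \<Sum>i\<in>A. x i d) z = (\<Sum>i\<in>A. bil (x i) z)"
  unfolding bil_def by (simp add: sum_distrib_right sum.swap[of _ A])

definition id_form :: "'d \<Rightarrow> 'd \<Rightarrow> complex" where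
  "id_form x y = (if x = y then 1 else 0)"

lemma sum_id_form: "(\<Sum>y\<in>UNIV. id_form (x::'d::finite) y * u y) = (u x :: complex)"
proof -
  have "(\<Sum>y\<in>UNIV. id_form x y * u y) = (\<Sum>y\<in>UNIV. if x = y then u y else 0)"
    by (rule sum.cong) (auto simp: id_form_def)
  then show ?thesis by simp
qed

lemma mvec_id_form: "mvec id_form u = u"
  unfolding mvec_def by (simp add: sum_id_form)

lemma mprod_id_form: "mprod id_form id_form = (id_form :: 'd::finite \<Rightarrow> _)"
  unfolding mprod_def by (simp add: sum_id_form)

lemma mvec_rank_one_update:
  "mvec (\<lambda>x y. p * u x * w y + q * id_form x y) \<alpha> = (\<lambda>x. p * bil w \<alpha> * u x + q * \<alpha> x)"
proof
  fix x
  have "(\<Sum>y\<in>UNIV. (p * u x * w y + q * id_form x y) * \<alpha> y)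
      = p * u x * (\<Sum>y\<in>UNIV. w y * \<alpha> y) + q * (\<Sum>y\<in>UNIV. id_form x y * \<alpha> y)"
    by (simp add: distrib_right sum.distrib sum_distrib_left mult.assoc)
  then show "mvec (\<lambda>x y. p * u x * w y + q * id_form x y) \<alpha> x = p * bil w \<alpha> * u x + q * \<alpha> x"
    unfolding mvec_def bil_def sum_id_form by (simp add: mult_ac)
qed

lemma bil_mvec_sym:
  assumes "\<forall>x y. S x y = S y x"
  shows "bil (mvec S \<alpha>) \<beta> = bil \<alpha> (mvec S \<beta>)"
proof -
  have "bil (mvec S \<alpha>) \<beta> = (\<Sum>x\<in>UNIV. \<Sum>y\<in>UNIV. S x y * \<alpha> y * \<beta> x)"
    unfolding bil_def mvec_def by (simp add: sum_distrib_right)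
  also have "\<dots> = (\<Sum>y\<in>UNIV. \<Sum>x\<in>UNIV. S y x * \<alpha> y * \<beta> x)"
    by (subst sum.swap) (simp add: assms)
  also have "\<dots> = bil \<alpha> (mvec S \<beta>)"
    unfolding bil_def mvec_def by (simp add: sum_distrib_left algebra_simps)
  finally show ?thesis .
qed

definition screening_eigenvalue :: "('d::finite \<Rightarrow> complex) \<Rightarrow> 'd fld2 \<Rightarrow> complex" where
  "screening_eigenvalue \<alpha> X = bil \<alpha> (mvec (qf X) \<alpha>) / 2 - bil (df X) \<alpha>"

lemma commutes_screening_iff_eigenvalue:
  "commutes_screening \<alpha> X \<longleftrightarrow> mvec (qf X) \<alpha> = (\<lambda>x. screening_eigenvalue \<alpha> X * \<alpha> x)"
proof -
  have "(\<Sum>c\<in>UNIV. \<Sum>b\<in>UNIV. \<alpha> c * qf X c b * \<alpha> b) = bil \<alpha> (mvec (qf X) \<alpha>)"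
    unfolding bil_def mvec_def by (simp add: sum_distrib_left mult.assoc)
  then show ?thesis
    unfolding commutes_screening_def screening_eigenvalue_def fun_eq_iff
    by (simp add: mvec_def)
qed

lemma commutes_screening_df:
  assumes "commutes_screening \<alpha> X"
  shows "bil (df X) \<alpha> = screening_eigenvalue \<alpha> X * (bil \<alpha> \<alpha> / 2 - 1)"
proof -
  let ?l = "screening_eigenvalue \<alpha> X"
  have "bil \<alpha> (mvec (qf X) \<alpha>) = ?l * bil \<alpha> \<alpha>"
    using assms unfolding commutes_screening_iff_eigenvalue by (simp add: bil_scale_right)
  then have "?l = ?l * bil \<alpha> \<alpha> / 2 - bil (df X) \<alpha>"
    using screening_eigenvalue_def[of \<alpha> X] by simp
  then show ?thesis by (simp add: field_simps)
qed

lemma commutes_screeningI: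
  assumes "mvec (qf X) \<alpha> = (\<lambda>x. l * \<alpha> x)" and "bil (df X) \<alpha> = l * (bil \<alpha> \<alpha> / 2 - 1)"
  shows "commutes_screening \<alpha> X"
proof -
  have "screening_eigenvalue \<alpha> X = l"
    unfolding screening_eigenvalue_def assms bil_scale_right by (simp add: algebra_simps)
  then show ?thesis using assms(1) by (simp add: commutes_screening_iff_eigenvalue)
qed

lemma screening_eigenvalue_eq:
  assumes "\<forall>x y. qf X x y = qf X y x"
    and "commutes_screening \<alpha> X" and "commutes_screening \<beta> X" and "bil \<alpha> \<beta> \<noteq> 0"
  shows "screening_eigenvalue \<alpha> X = screening_eigenvalue \<beta> X"
proof -
  have "screening_eigenvalue \<alpha> X * bil \<alpha> \<beta> = screening_eigenvalue \<beta> X * bil \<alpha> \<beta>"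
    using bil_mvec_sym[OF assms(1), of \<alpha> \<beta>] assms(2,3)
    unfolding commutes_screening_iff_eigenvalue by (simp add: bil_scale_left bil_scale_right)
  then show ?thesis using assms(4) by simp
qed

lemma commutes_screening_rank_one_update:
  assumes "bil u \<alpha> = 0" and "bil v \<alpha> = q * (bil \<alpha> \<alpha> / 2 - 1)"
  shows "commutes_screening \<alpha> (Fld2 (\<lambda>x y. p * u x * u y + q * id_form x y) v)"
  by (rule commutes_screeningI[where l = q]) (simp_all add: mvec_rank_one_update assms)

lemma is_virasoro_free_boson:
  fixes t :: "'d::finite \<Rightarrow> complex"
  shows "is_virasoro (Fld2 id_form t) (of_nat CARD('d) - 12 * bil t t)"
  unfolding is_virasoro_def lambda_bracket_def
  by (simp add: mvec_id_form mprod_id_form fld_scale_def id_form_def fun_eq_iff)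

lemma fld_combination_eq:
  "fld_add (fld_add (fld_scale c1 (fld_quad u u)) (fld_scale c2 (fld_deriv u))) (fld_scale c3 (Fld2 id_form t))
     = Fld2 (\<lambda>x y. 2 * c1 * u x * u y + c3 * id_form x y) (\<lambda>x. c2 * u x + c3 * t x)"
  by (simp add: fld_add_def fld_scale_def fld_quad_def fld_deriv_def algebra_simps)

lemma gram_inverse_outer_sum:
  fixes b :: "nat \<Rightarrow> 'd::finite \<Rightarrow> complex"
  assumes card: "CARD('d) = N"
    and Gi: "Gi \<in> carrier_mat N N"
    and inv: "Gi * mat N N (\<lambda>(i, j). bil (b i) (b j)) = 1\<^sub>m N"
  shows "(\<Sum>i<N. \<Sum>j<N. Gi $$ (i, j) * b i d * b j d') = id_form d d'"
proof -
  obtain e where e: "bij_betw e {0..<N} (UNIV :: 'd set)"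
    using ex_bij_betw_nat_finite[of "UNIV :: 'd set"] card by auto
  define M where "M = mat N N (\<lambda>(x, j). b j (e x))"
  have M: "M \<in> carrier_mat N N" and MT: "transpose_mat M \<in> carrier_mat N N"
    unfolding M_def by simp_all
  have gram: "mat N N (\<lambda>(i, j). bil (b i) (b j)) = transpose_mat M * M"
  proof (rule eq_matI)
    fix i j assume "i < dim_row (transpose_mat M * M)" and "j < dim_col (transpose_mat M * M)"
    then have i: "i < N" and j: "j < N" using M by auto
    have "(transpose_mat M * M) $$ (i, j) = (\<Sum>x\<in>{0..<N}. b i (e x) * b j (e x))"
      using i j M by (simp add: M_def scalar_prod_def)
    also have "\<dots> = bil (b i) (b j)"
      using sum.reindex_bij_betw[OF e, of "\<lambda>d. b i d * b j d"] by (simp add: bil_def)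
    finally show "mat N N (\<lambda>(i, j). bil (b i) (b j)) $$ (i, j) = (transpose_mat M * M) $$ (i, j)"
      using i j by simp
  qed (use M in auto)
  have "(Gi * transpose_mat M) * M = 1\<^sub>m N"
    using inv gram by (simp add: assoc_mult_mat[OF Gi MT M])
  then have right_inv: "M * (Gi * transpose_mat M) = 1\<^sub>m N"
    using mat_mult_left_right_inverse[of "Gi * transpose_mat M" N M] Gi MT M by auto
  have entry: "(\<Sum>i<N. \<Sum>j<N. Gi $$ (i, j) * b i (e x) * b j (e z)) = (if x = z then 1 else 0)"
    if x: "x < N" and z: "z < N" for x z
  proof -
    have "(M * (Gi * transpose_mat M)) $$ (x, z)
        = (\<Sum>i\<in>{0..<N}. b i (e x) * (\<Sum>j\<in>{0..<N}. Gi $$ (i, j) * b j (e z)))"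
      using x z Gi M by (simp add: M_def scalar_prod_def)
    also have "\<dots> = (\<Sum>i<N. \<Sum>j<N. Gi $$ (i, j) * b i (e x) * b j (e z))"
      by (simp add: sum_distrib_left atLeast0LessThan mult.commute mult.left_commute)
    finally show ?thesis using right_inv x z by simp
  qed
  have "e ` {0..<N} = UNIV" using e by (simp add: bij_betw_def)
  then obtain x z where x: "x < N" "d = e x" and z: "z < N" "d' = e z"
    by (metis atLeastLessThan_iff imageE UNIV_I)
  have "(d = d') = (x = z)" using e x z unfolding bij_betw_def inj_on_def by auto
  then show ?thesis using entry[OF x(1) z(1)] x z by (simp add: id_form_def)
qed

lemma gram_orthogonal_eq_zero:
  fixes b :: "nat \<Rightarrow> 'd::finite \<Rightarrow> complex"
  assumes card: "CARD('d) = N"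
    and Gi: "Gi \<in> carrier_mat N N"
    and inv: "Gi * mat N N (\<lambda>(i, j). bil (b i) (b j)) = 1\<^sub>m N"
    and orth: "\<forall>j<N. bil (b j) w = 0"
  shows "w = (\<lambda>_. 0)"
proof
  fix d
  have "w d = (\<Sum>d'\<in>UNIV. id_form d d' * w d')"
    by (simp add: sum_id_form)
  also have "\<dots> = (\<Sum>d'\<in>UNIV. (\<Sum>i<N. \<Sum>j<N. Gi $$ (i, j) * b i d * b j d') * w d')"
    by (simp add: gram_inverse_outer_sum[OF card Gi inv])
  also have "\<dots> = (\<Sum>i<N. \<Sum>j<N. Gi $$ (i, j) * b i d * bil (b j) w)"
    unfolding bil_def sum_distrib_right sum_distrib_left
    by (subst sum.swap, rule sum.cong, simp, subst sum.swap, rule sum.cong, simp, simp add: mult.assoc)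
  also have "\<dots> = 0"
    using orth by simp
  finally show "w d = 0" .
qed

lemma mat_inverse_if_trivial_kernel:
  fixes A :: "'a::field mat"
  assumes A: "A \<in> carrier_mat N N"
    and kernel: "\<And>c. c \<in> carrier_vec N \<Longrightarrow> A *\<^sub>v c = 0\<^sub>v N \<Longrightarrow> c = 0\<^sub>v N"
  obtains B where "mat_inverse A = Some B" and "B \<in> carrier_mat N N" and "B * A = 1\<^sub>m N"
proof -
  have "det A \<noteq> 0"
    using det_0_iff_vec_prod_zero_field[OF A] kernel by blast
  then have "A \<in> Units (ring_mat TYPE('a) N ())"
    by (rule det_non_zero_imp_unit[OF A])
  then obtain B where B: "mat_inverse A = Some B"
    using mat_inverse(1)[OF A] by fastforce
  with mat_inverse(2)[OF A B] that show ?thesis by blast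
qed

lemma second_difference_zero_boundary:
  fixes \<gamma> :: "nat \<Rightarrow> 'a::field_char_0"
  assumes harmonic: "\<And>j. j \<in> {1..n-1} \<Longrightarrow> 2 * \<gamma> j - \<gamma> (j - 1) - \<gamma> (j + 1) = 0"
    and "\<gamma> 0 = 0" and "\<gamma> n = 0" and "j \<le> n"
  shows "\<gamma> j = 0"
proof -
  have linear: "\<gamma> i = of_nat i * \<gamma> 1 \<and> \<gamma> (i + 1) = of_nat (i + 1) * \<gamma> 1" if "i + 1 \<le> n" for i
    using that
  proof (induction i)
    case 0
    then show ?case using \<open>\<gamma> 0 = 0\<close> by simp
  next
    case (Suc i)
    then have IH: "\<gamma> i = of_nat i * \<gamma> 1" "\<gamma> (i + 1) = of_nat (i + 1) * \<gamma> 1" by simp_all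
    have "2 * \<gamma> (i + 1) - \<gamma> i - \<gamma> (i + 2) = 0"
      using harmonic[of "i + 1"] Suc.prems by simp
    then have "\<gamma> (i + 2) = of_nat (i + 2) * \<gamma> 1"
      using IH by (simp add: algebra_simps)
    then show ?case using IH by (simp add: add.commute)
  qed
  show ?thesis
  proof (cases n)
    case 0
    then show ?thesis using \<open>\<gamma> 0 = 0\<close> \<open>j \<le> n\<close> by simp
  next
    case (Suc m)
    then have "of_nat n * \<gamma> 1 = 0" using linear[of m] \<open>\<gamma> n = 0\<close> by simp
    then have "\<gamma> 1 = 0" unfolding mult_eq_0_iff of_nat_eq_0_iff using Suc by simp
    then show ?thesis
      using linear[of j] linear[of m] \<open>j \<le> n\<close> Suc by (cases "j = n") auto
  qed
qed

lemma sum_quadratic_closed_form: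
  "(\<Sum>i=1..m. (N - of_nat i) * ((of_nat i - 1) * L - 1 :: complex))
     = L * (N * of_nat m * (of_nat m - 1) / 2 - (of_nat m + 1) * of_nat m * (of_nat m - 1) / 3)
       - (N * of_nat m - of_nat m * (of_nat m + 1) / 2)"
  by (induction m) (simp_all add: field_simps)

locale screening_setup =
  fixes n :: nat and k :: complex and a :: "nat \<Rightarrow> 'd::finite \<Rightarrow> complex"
    and \<psi> \<xi> :: "'d \<Rightarrow> complex" and K :: complex
  assumes n_ge_2: "n \<ge> 2" and card_d: "CARD('d) = n + 1"
    and K_def: "K = k + of_nat n" and K_nonzero: "K \<noteq> 0"
    and data: "screening_data n k a \<psi> \<xi>"
begin

lemma bil_a_a:
  "i \<in> {1..n-1} \<Longrightarrow> j \<in> {1..n-1} \<Longrightarrow>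
   bil (a i) (a j) = (if i = j then 2 * K else if i + 1 = j \<or> j + 1 = i then - K else 0)"
  and bil_a_psi: "i \<in> {1..n-1} \<Longrightarrow> bil (a i) \<psi> = (if i = 1 then - K else 0)"
  and bil_a_xi: "i \<in> {1..n-1} \<Longrightarrow> bil (a i) \<xi> = 0"
  and bil_psi_psi: "bil \<psi> \<psi> = 1" and bil_psi_xi: "bil \<psi> \<xi> = 1" and bil_xi_xi: "bil \<xi> \<xi> = 0"
  using data unfolding screening_data_def Let_def K_def[symmetric] by auto

text \<open>
  Putting psi at position 0 makes the inner products of psi, a_1, ..., a_(n-1) with each a_j
  follow one tridiagonal pattern, since (psi, a_1) = -K.
\<close>
definition chain :: "nat \<Rightarrow> 'd \<Rightarrow> complex" where
  "chain i = (if i = 0 then \<psi> else a i)"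

lemma screenings_eq_chain:
  "((\<forall>i\<in>{1..n-1}. P (a i)) \<and> P \<psi>) \<longleftrightarrow> (\<forall>i<n. P (chain i))"
proof
  assume "(\<forall>i\<in>{1..n-1}. P (a i)) \<and> P \<psi>"
  then show "\<forall>i<n. P (chain i)" by (auto simp: chain_def)
next
  assume chain: "\<forall>i<n. P (chain i)"
  have "P (a i)" if "i \<in> {1..n-1}" for i
  proof -
    have "i < n" and "i \<noteq> 0" using that n_ge_2 by auto
    then show ?thesis using chain by (auto simp: chain_def)
  qed
  moreover have "P \<psi>"
    using chain[rule_format, of 0] n_ge_2 by (simp add: chain_def)
  ultimately show "(\<forall>i\<in>{1..n-1}. P (a i)) \<and> P \<psi>" by blast
qed

lemma bil_chain_a:
  assumes "i < n" and "j \<in> {1..n-1}"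
  shows "bil (chain i) (a j) = (if i = j then 2 * K else if i + 1 = j \<or> j + 1 = i then - K else 0)"
  using assms bil_a_a[of i j] bil_a_psi[of j] by (auto simp: chain_def bil_comm)

lemma bil_chain_self: "i < n \<Longrightarrow> bil (chain i) (chain i) = (if i = 0 then 1 else 2 * K)"
  using bil_a_a[of i i] by (simp add: chain_def bil_psi_psi)

lemma bil_chain_succ: "i + 1 < n \<Longrightarrow> bil (chain i) (chain (i + 1)) = - K"
  using bil_chain_a[of i "i + 1"] by (simp add: chain_def)

definition lin_comb :: "(nat \<Rightarrow> complex) \<Rightarrow> complex \<Rightarrow> 'd \<Rightarrow> complex" where
  "lin_comb f c = (\<lambda>d. (\<Sum>i<n. f i * chain i d) + c * \<xi> d)"

lemma lin_comb_expand:
  "lin_comb f c = (\<lambda>d. f 0 * \<psi> d + (\<Sum>i=1..n-1. f i * a i d) + c * \<xi> d)"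
proof -
  have "{..<n} = insert 0 {1..n-1}" using n_ge_2 by auto
  then show ?thesis
    unfolding lin_comb_def by (auto simp: chain_def intro!: sum.cong)
qed

lemma bil_lin_comb_left: "bil (lin_comb f c) w = (\<Sum>i<n. f i * bil (chain i) w) + c * bil \<xi> w"
  unfolding lin_comb_def by (simp add: bil_add_left bil_scale_left bil_sum_left)

lemma bil_lin_comb_a:
  assumes j: "j \<in> {1..n-1}" and "f n = 0"
  shows "bil (lin_comb f c) (a j) = K * (2 * f j - f (j - 1) - f (j + 1))"
proof -
  have "(\<Sum>i<n. f i * bil (chain i) (a j))
      = (\<Sum>i<n. (if i = j then 2 * K * f j else 0) + (if i = j - 1 then - K * f (j - 1) else 0)
                + (if i = j + 1 then - K * f (j + 1) else 0))"
    using j by (intro sum.cong) (auto simp: bil_chain_a)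
  also have "\<dots> = 2 * K * f j - K * f (j - 1) - K * f (j + 1)"
    using j \<open>f n = 0\<close> by (cases "j + 1 = n") (auto simp: sum.distrib)
  finally show ?thesis
    unfolding bil_lin_comb_left using j by (simp add: bil_comm[of \<xi>] bil_a_xi algebra_simps)
qed

lemma bil_lin_comb_psi: "bil (lin_comb f c) \<psi> = f 0 - K * f 1 + c"
proof -
  have "(\<Sum>i<n. f i * bil (chain i) \<psi>)
      = (\<Sum>i<n. (if i = 0 then f 0 else 0) + (if i = 1 then - K * f 1 else 0))"
    by (intro sum.cong) (auto simp: chain_def bil_psi_psi bil_a_psi)
  also have "\<dots> = f 0 - K * f 1"
    using n_ge_2 by (simp add: sum.distrib)
  finally show ?thesis
    unfolding bil_lin_comb_left by (simp add: bil_comm[of \<xi>] bil_psi_xi)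
qed

lemma bil_lin_comb_xi: "bil (lin_comb f c) \<xi> = f 0"
  unfolding lin_comb_expand
  by (simp add: bil_add_left bil_scale_left bil_sum_left bil_a_xi bil_psi_xi bil_xi_xi)

abbreviation H :: "'d \<Rightarrow> complex" where
  "H \<equiv> hvec n k a \<psi> \<xi>"

lemma hvec_eq_lin_comb: "H = lin_comb (\<lambda>i. (of_nat n - of_nat i) / of_nat n) (ell n k)"
  unfolding hvec_def lin_comb_expand using n_ge_2 by (auto simp: fun_eq_iff)

lemma bil_hvec_chain: "i < n \<Longrightarrow> bil H (chain i) = 0"
  unfolding hvec_eq_lin_comb using n_ge_2 K_def
  by (cases "i = 0")
    (auto simp: chain_def bil_lin_comb_psi bil_lin_comb_a ell_def of_nat_diff field_simps)

lemma bil_hvec_xi: "bil H \<xi> = 1"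
  unfolding hvec_eq_lin_comb bil_lin_comb_xi using n_ge_2 by simp

definition tcoeff :: "nat \<Rightarrow> complex" where
  "tcoeff i = (of_nat n - of_nat i) * ((of_nat i - 1) * (K - 1) - 1) / (2 * K)"

definition tvec :: "'d \<Rightarrow> complex" where
  "tvec = lin_comb tcoeff 0"

lemma tcoeff_0: "tcoeff 0 = - of_nat n / 2"
  unfolding tcoeff_def using K_nonzero by (simp add: field_simps)

text \<open>
  The coefficients are quadratic in i with leading term -(K-1) i^2/(2K), so their second
  difference is (K-1)/K.
\<close>
lemma bil_tvec_chain: "i < n \<Longrightarrow> bil tvec (chain i) = bil (chain i) (chain i) / 2 - 1"
proof (cases "i = 0")
  case True
  then show ?thesis
    unfolding tvec_def using K_nonzero
    by (simp add: chain_def bil_lin_comb_psi bil_psi_psi tcoeff_0) (simp add: tcoeff_def field_simps)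
next
  case False
  assume "i < n"
  then have i: "i \<in> {1..n-1}" using False by auto
  have "K * (2 * tcoeff i - tcoeff (i - 1) - tcoeff (i + 1)) = K - 1"
    unfolding tcoeff_def using i K_nonzero by (simp add: of_nat_diff field_simps) algebra
  moreover have "tcoeff n = 0" by (simp add: tcoeff_def)
  ultimately show ?thesis
    unfolding tvec_def chain_def using i False bil_a_a[OF i i] by (simp add: bil_lin_comb_a)
qed

lemma gram_basis_chain: "gram_basis n a \<psi> \<xi> j = (if j < n then chain (n - 1 - j) else \<xi>)"
  unfolding gram_basis_def chain_def using n_ge_2 by auto

lemma lin_comb_orthogonal_eq_zero:
  assumes orth: "\<forall>i<n. bil (lin_comb f c) (chain i) = 0" and "bil (lin_comb f c) \<xi> = 0"
    and "f n = 0"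
  shows "(\<forall>j\<le>n. f j = 0) \<and> c = 0"
proof -
  have "f 0 = 0"
    using \<open>bil (lin_comb f c) \<xi> = 0\<close> by (simp add: bil_lin_comb_xi)
  moreover have "2 * f j - f (j - 1) - f (j + 1) = 0" if j: "j \<in> {1..n-1}" for j
  proof -
    have "j < n" and "chain j = a j" using j by (auto simp: chain_def)
    then have "K * (2 * f j - f (j - 1) - f (j + 1)) = 0"
      using orth bil_lin_comb_a[where f = f and c = c, OF j \<open>f n = 0\<close>] by metis
    then show ?thesis using K_nonzero by simp
  qed
  ultimately have f_zero: "f j = 0" if "j \<le> n" for j
    using second_difference_zero_boundary[of n f j] \<open>f n = 0\<close> that by blast
  moreover have "c = 0"
    using orth[rule_format, of 0] n_ge_2 bil_lin_comb_psi[of f c] f_zero[of 0] f_zero[of 1]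
    by (simp add: chain_def)
  ultimately show ?thesis by blast
qed

lemma gram_sum_eq_lin_comb:
  "(\<lambda>d. \<Sum>j<n+1. c j * gram_basis n a \<psi> \<xi> j d) = lin_comb (\<lambda>i. if i < n then c (n - 1 - i) else 0) (c n)"
proof
  fix d
  have "(\<Sum>j<n. c j * chain (n - 1 - j) d)
      = (\<Sum>j<n. (\<lambda>i. (if i < n then c (n - 1 - i) else 0) * chain i d) (n - Suc j))"
    by (intro sum.cong) auto
  also have "\<dots> = (\<Sum>i<n. (if i < n then c (n - 1 - i) else 0) * chain i d)"
    by (rule sum.nat_diff_reindex)
  finally show "(\<Sum>j<n+1. c j * gram_basis n a \<psi> \<xi> j d)
      = lin_comb (\<lambda>i. if i < n then c (n - 1 - i) else 0) (c n) d"
    unfolding lin_comb_def gram_basis_chain by simp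
qed

lemma gram_mat_kernel_trivial:
  assumes c: "c \<in> carrier_vec (n + 1)" and kernel: "gram_mat n a \<psi> \<xi> *\<^sub>v c = 0\<^sub>v (n + 1)"
  shows "c = 0\<^sub>v (n + 1)"
proof -
  define w where "w = (\<lambda>d. \<Sum>j<n+1. c $ j * gram_basis n a \<psi> \<xi> j d)"
  have orth: "bil w (gram_basis n a \<psi> \<xi> i) = 0" if "i < n + 1" for i
  proof -
    have "0 = (gram_mat n a \<psi> \<xi> *\<^sub>v c) $ i"
      using kernel that by simp
    also have "\<dots> = (\<Sum>j<n+1. bil (gram_basis n a \<psi> \<xi> i) (gram_basis n a \<psi> \<xi> j) * c $ j)"
      using that c unfolding gram_mat_def by (simp add: scalar_prod_def atLeast0LessThan)
    also have "\<dots> = bil w (gram_basis n a \<psi> \<xi> i)"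
      unfolding w_def bil_sum_left bil_scale_left by (simp add: bil_comm mult.commute)
    finally show ?thesis by simp
  qed
  define \<gamma> where "\<gamma> = (\<lambda>i. if i < n then c $ (n - 1 - i) else 0)"
  have w_eq: "w = lin_comb \<gamma> (c $ n)"
    unfolding w_def \<gamma>_def by (rule gram_sum_eq_lin_comb)
  have "bil w (chain i) = 0" if "i < n" for i
  proof -
    have "n - 1 - i < n + 1" and "gram_basis n a \<psi> \<xi> (n - 1 - i) = chain i"
      using that by (auto simp: gram_basis_chain)
    then show ?thesis using orth by metis
  qed
  then have "\<forall>i<n. bil (lin_comb \<gamma> (c $ n)) (chain i) = 0"
    by (simp add: w_eq)
  moreover have "bil (lin_comb \<gamma> (c $ n)) \<xi> = 0"
    using orth[of n] by (simp add: w_eq gram_basis_chain)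
  moreover have "\<gamma> n = 0"
    by (simp add: \<gamma>_def)
  ultimately have \<gamma>_zero: "\<forall>j\<le>n. \<gamma> j = 0" and "c $ n = 0"
    using lin_comb_orthogonal_eq_zero by blast+
  moreover have "c $ j = \<gamma> (n - 1 - j)" if "j < n" for j
    using that by (simp add: \<gamma>_def)
  ultimately show ?thesis
    using c by (intro eq_vecI) (auto simp: less_Suc_eq)
qed

definition gram_inv :: "complex mat" where
  "gram_inv = the (mat_inverse (gram_mat n a \<psi> \<xi>))"

lemma gram_inv: "gram_inv \<in> carrier_mat (n + 1) (n + 1)" "gram_inv * gram_mat n a \<psi> \<xi> = 1\<^sub>m (n + 1)"
proof -
  have "gram_mat n a \<psi> \<xi> \<in> carrier_mat (n + 1) (n + 1)"
    unfolding gram_mat_def by simp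
  then obtain B where "mat_inverse (gram_mat n a \<psi> \<xi>) = Some B"
    and "B \<in> carrier_mat (n + 1) (n + 1)" and "B * gram_mat n a \<psi> \<xi> = 1\<^sub>m (n + 1)"
    using mat_inverse_if_trivial_kernel gram_mat_kernel_trivial by metis
  then show "gram_inv \<in> carrier_mat (n + 1) (n + 1)" "gram_inv * gram_mat n a \<psi> \<xi> = 1\<^sub>m (n + 1)"
    unfolding gram_inv_def by simp_all
qed

lemma gram_inv_outer_sum:
  "(\<Sum>i<n+1. \<Sum>j<n+1. gram_inv $$ (i, j) * gram_basis n a \<psi> \<xi> i d * gram_basis n a \<psi> \<xi> j d')
     = id_form d d'"
  using gram_inverse_outer_sum[OF card_d gram_inv(1)] gram_inv(2) by (simp add: gram_mat_def)

lemma orthogonal_chain_eq_hvec_multiple: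
  assumes "\<forall>i<n. bil w (chain i) = 0"
  shows "w = (\<lambda>d. bil \<xi> w * H d)"
proof -
  let ?r = "\<lambda>d. w d - bil \<xi> w * H d"
  have "\<forall>j<n+1. bil (gram_basis n a \<psi> \<xi> j) ?r = 0"
    using assms
    by (auto simp: gram_basis_chain bil_comm[of _ ?r] bil_diff_left bil_scale_left bil_comm[of w]
        bil_hvec_chain bil_hvec_xi less_Suc_eq)
  then have "?r = (\<lambda>_. 0)"
    using gram_orthogonal_eq_zero[OF card_d gram_inv(1)] gram_inv(2) by (simp add: gram_mat_def)
  then show ?thesis by (simp add: fun_eq_iff)
qed

lemma Tfield_eq: "Tfield n k a \<psi> \<xi> = Fld2 id_form tvec"
proof -
  let ?b = "gram_basis n a \<psi> \<xi>"
  have quadratic: "(\<Sum>i\<le>n. \<Sum>j\<le>n. (1/2) * gram_inv $$ (i, j) * (?b i x * ?b j y + ?b j x * ?b i y))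
      = id_form x y" for x y
  proof -
    have "(\<Sum>i\<le>n. \<Sum>j\<le>n. (1/2) * gram_inv $$ (i, j) * (?b i x * ?b j y + ?b j x * ?b i y))
       = (1/2) * (\<Sum>i<n+1. \<Sum>j<n+1. gram_inv $$ (i, j) * ?b i x * ?b j y)
         + (1/2) * (\<Sum>i<n+1. \<Sum>j<n+1. gram_inv $$ (i, j) * ?b i y * ?b j x)"
      unfolding sum_distrib_left lessThan_Suc_atMost[symmetric] Suc_eq_plus1[symmetric]
        sum.distrib[symmetric]
      by (rule sum.cong, simp, rule sum.cong, simp, simp add: algebra_simps)
    then show ?thesis
      unfolding gram_inv_outer_sum by (simp add: id_form_def)
  qed
  have linear: "(\<lambda>d. (\<Sum>i=1..n-1. (of_nat n - of_nat i) * ((of_nat i - 1) * (k + of_nat n - 1) - 1)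
                          / (2 * (k + of_nat n)) * a i d) - of_nat n / 2 * \<psi> d) = tvec"
    unfolding tvec_def lin_comb_expand tcoeff_0 K_def[symmetric] by (simp add: tcoeff_def fun_eq_iff)
  show ?thesis
    unfolding Tfield_def Let_def gram_inv_def[symmetric] fld_add_def fld_deriv_def quadratic linear
    by simp
qed

lemma bil_tvec_tvec: "bil tvec tvec = of_nat n / 4 + (K - 1) * (\<Sum>i=1..n-1. tcoeff i)"
proof -
  have "bil tvec tvec = bil (lin_comb tcoeff 0) tvec"
    by (simp only: tvec_def)
  also have "\<dots> = tcoeff 0 * bil tvec (chain 0) + (\<Sum>i=1..n-1. tcoeff i * bil tvec (chain i))"
    unfolding lin_comb_expand
    by (simp add: bil_add_left bil_scale_left bil_sum_left chain_def bil_comm[of _ tvec])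
  also have "(\<Sum>i=1..n-1. tcoeff i * bil tvec (chain i)) = (K - 1) * (\<Sum>i=1..n-1. tcoeff i)"
    unfolding sum_distrib_left
    by (intro sum.cong) (auto simp: bil_tvec_chain bil_chain_self)
  finally show ?thesis
    using n_ge_2 by (simp add: bil_tvec_chain bil_chain_self tcoeff_0)
qed

lemma central_charge_eq: "central_charge n k = of_nat n + 1 - 12 * bil tvec tvec"
proof -
  have m: "of_nat (n - 1) = (of_nat n - 1 :: complex)"
    using n_ge_2 by (simp add: of_nat_diff)
  have "(\<Sum>i=1..n-1. tcoeff i)
      = (\<Sum>i=1..n-1. (of_nat n - of_nat i) * ((of_nat i - 1) * (K - 1) - 1)) / (2 * K)"
    unfolding tcoeff_def by (simp add: sum_divide_distrib)
  also have "\<dots> = ((K - 1) * (of_nat n * (of_nat n - 1) * (of_nat n - 2) / 2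
                                - of_nat n * (of_nat n - 1) * (of_nat n - 2) / 3)
                     - (of_nat n * (of_nat n - 1) - (of_nat n - 1) * of_nat n / 2)) / (2 * K)"
    unfolding sum_quadratic_closed_form m by (simp add: algebra_simps)
  finally have sum_tcoeff: "(\<Sum>i=1..n-1. tcoeff i) = \<dots>" .
  have k_eq: "k = K - of_nat n"
    using K_def by simp
  show ?thesis
    unfolding bil_tvec_tvec central_charge_def sum_tcoeff k_eq using K_nonzero
    by (simp add: field_simps) (simp add: algebra_simps power2_eq_square power3_eq_cube)
qed

lemma Tfield_is_virasoro: "is_virasoro (Tfield n k a \<psi> \<xi>) (central_charge n k)"
  using is_virasoro_free_boson[of tvec]
  unfolding Tfield_eq central_charge_eq card_d of_nat_add of_nat_1 by simp

lemma combination_weight2: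
  "Fld2 (\<lambda>x y. 2 * c1 * H x * H y + c3 * id_form x y) (\<lambda>x. c2 * H x + c3 * tvec x) \<in> weight2_fields"
  by (simp add: weight2_fields_def id_form_def)

lemma combination_commutes:
  "i < n \<Longrightarrow> commutes_screening (chain i)
     (Fld2 (\<lambda>x y. 2 * c1 * H x * H y + c3 * id_form x y) (\<lambda>x. c2 * H x + c3 * tvec x))"
  by (rule commutes_screening_rank_one_update)
    (simp_all add: bil_hvec_chain bil_add_left bil_scale_left bil_tvec_chain)

lemma combination_eq_zero:
  assumes "Fld2 (\<lambda>x y. 2 * c1 * H x * H y + c3 * id_form x y) (\<lambda>x. c2 * H x + c3 * tvec x) = fld_zero"
  shows "c1 = 0 \<and> c2 = 0 \<and> c3 = 0"
proof -
  have S: "(\<lambda>x y. 2 * c1 * H x * H y + c3 * id_form x y) = (\<lambda>_ _. 0)"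
    and v: "(\<lambda>x. c2 * H x + c3 * tvec x) = (\<lambda>_. 0)"
    using assms by (simp_all add: fld_zero_def)
  have "mvec (\<lambda>x y. 2 * c1 * H x * H y + c3 * id_form x y) \<xi> = (\<lambda>_. 0)"
    unfolding S by (simp add: mvec_def)
  then have S_xi: "(\<lambda>x. 2 * c1 * H x + c3 * \<xi> x) = (\<lambda>_. 0)"
    by (simp add: mvec_rank_one_update bil_hvec_xi)
  then have "bil (\<lambda>x. 2 * c1 * H x + c3 * \<xi> x) \<xi> = 0"
    by (simp add: bil_def)
  then have c1: "c1 = 0"
    by (simp add: bil_add_left bil_scale_left bil_hvec_xi bil_xi_xi)
  from S_xi have "bil (\<lambda>x. 2 * c1 * H x + c3 * \<xi> x) \<psi> = 0"
    by (simp add: bil_def)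
  then have c3: "c3 = 0"
    using bil_hvec_chain[of 0] n_ge_2
    by (simp add: bil_add_left bil_scale_left chain_def bil_comm[of \<xi> \<psi>] bil_psi_xi)
  from v have "bil (\<lambda>x. c2 * H x + c3 * tvec x) \<xi> = 0"
    by (simp add: bil_def)
  then have "c2 = 0"
    using c3 by (simp add: bil_add_left bil_scale_left bil_hvec_xi)
  with c1 c3 show ?thesis by simp
qed

lemma screening_eigenvalue_chain:
  assumes sym: "\<forall>x y. qf X x y = qf X y x" and comm: "\<forall>i<n. commutes_screening (chain i) X"
  shows "i < n \<Longrightarrow> screening_eigenvalue (chain i) X = screening_eigenvalue \<psi> X"
proof (induction i)
  case 0
  then show ?case by (simp add: chain_def)
next
  case (Suc i)
  have "screening_eigenvalue (chain (Suc i)) X = screening_eigenvalue (chain i) X"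
    using screening_eigenvalue_eq[OF sym, of "chain (Suc i)" "chain i"] comm Suc.prems
      bil_chain_succ[of i] K_nonzero
    by (simp add: bil_comm)
  with Suc show ?case by simp
qed

lemma symmetric_chain_eigenform:
  assumes sym: "\<forall>x y. S x y = S y x" and eig: "\<forall>i<n. mvec S (chain i) = (\<lambda>x. l * chain i x)"
  shows "S = (\<lambda>x y. bil \<xi> (mvec S \<xi>) * H x * H y + l * id_form x y)"
proof -
  have row_bil: "bil (\<lambda>y. S x y - l * id_form x y) \<alpha> = mvec S \<alpha> x - l * \<alpha> x" for x \<alpha>
    unfolding bil_diff_left bil_scale_left by (simp add: bil_def mvec_def sum_id_form)
  define \<sigma> where "\<sigma> = (\<lambda>x. mvec S \<xi> x - l * \<xi> x)"
  have "\<forall>i<n. bil \<sigma> (chain i) = 0"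
    using bil_mvec_sym[OF sym, of \<xi>] eig
    by (simp add: \<sigma>_def bil_diff_left bil_scale_left bil_scale_right)
  then have "\<sigma> = (\<lambda>x. bil \<xi> \<sigma> * H x)"
    by (rule orthogonal_chain_eq_hvec_multiple)
  moreover have "bil \<sigma> \<xi> = bil (mvec S \<xi>) \<xi>"
    by (simp add: \<sigma>_def bil_diff_left bil_scale_left bil_xi_xi)
  then have "bil \<xi> \<sigma> = bil \<xi> (mvec S \<xi>)"
    by (metis bil_comm)
  ultimately have \<sigma>_eq: "\<sigma> = (\<lambda>x. bil \<xi> (mvec S \<xi>) * H x)"
    by simp
  have row: "(\<lambda>y. S x y - l * id_form x y) = (\<lambda>y. \<sigma> x * H y)" for x
  proof -
    have "\<forall>i<n. bil (\<lambda>y. S x y - l * id_form x y) (chain i) = 0"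
      using eig by (simp add: row_bil)
    then have "(\<lambda>y. S x y - l * id_form x y) = (\<lambda>y. bil \<xi> (\<lambda>y. S x y - l * id_form x y) * H y)"
      by (rule orthogonal_chain_eq_hvec_multiple)
    then show ?thesis
      by (simp add: bil_comm[of \<xi> "\<lambda>y. S x y - l * id_form x y"] row_bil \<sigma>_def)
  qed
  show ?thesis
  proof (intro ext)
    fix x y
    show "S x y = bil \<xi> (mvec S \<xi>) * H x * H y + l * id_form x y"
      using fun_cong[OF row[of x], of y] \<sigma>_eq by (simp add: algebra_simps)
  qed
qed

lemma commuting_field_is_combination:
  assumes "X \<in> weight2_fields" and comm: "\<forall>i<n. commutes_screening (chain i) X"
  shows "\<exists>c1 c2 c3. X = Fld2 (\<lambda>x y. 2 * c1 * H x * H y + c3 * id_form x y) (\<lambda>x. c2 * H x + c3 * tvec x)"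
proof -
  have sym: "\<forall>x y. qf X x y = qf X y x"
    using assms(1) by (simp add: weight2_fields_def)
  define l where "l = screening_eigenvalue \<psi> X"
  have eig: "screening_eigenvalue (chain i) X = l" if "i < n" for i
    using screening_eigenvalue_chain[OF sym comm that] by (simp add: l_def)
  have S: "qf X = (\<lambda>x y. bil \<xi> (mvec (qf X) \<xi>) * H x * H y + l * id_form x y)"
    using comm eig
    by (intro symmetric_chain_eigenform[OF sym]) (simp add: commutes_screening_iff_eigenvalue)
  have "bil (df X) (chain i) = l * bil tvec (chain i)" if "i < n" for i
    using commutes_screening_df[of "chain i" X] comm eig[OF that] bil_tvec_chain[OF that] that by simp
  then have "\<forall>i<n. bil (\<lambda>x. df X x - l * tvec x) (chain i) = 0"
    by (simp add: bil_diff_left bil_scale_left)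
  moreover define c where "c = bil \<xi> (\<lambda>x. df X x - l * tvec x)"
  ultimately have "(\<lambda>x. df X x - l * tvec x) = (\<lambda>x. c * H x)"
    using orthogonal_chain_eq_hvec_multiple by blast
  then have v: "df X = (\<lambda>x. c * H x + l * tvec x)"
    by (simp add: fun_eq_iff diff_eq_eq)
  have "X = Fld2 (\<lambda>x y. 2 * (bil \<xi> (mvec (qf X) \<xi>) / 2) * H x * H y + l * id_form x y)
              (\<lambda>x. c * H x + l * tvec x)"
    by (rule fld2.expand) (use S v in simp)
  then show ?thesis by blast
qed

lemma commuting_fields_eq_span:
  "{X \<in> weight2_fields. \<forall>i<n. commutes_screening (chain i) X}
     = {Fld2 (\<lambda>x y. 2 * c1 * H x * H y + c3 * id_form x y) (\<lambda>x. c2 * H x + c3 * tvec x) | c1 c2 c3. True}"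
  using commuting_field_is_combination combination_weight2 combination_commutes by auto

end

theorem lemma2p2:
  fixes n :: nat
  assumes "n \<ge> 2" and "CARD('d) = n + 1"
  shows "\<exists>B :: complex set. finite B \<and>
    (\<forall>k. k \<notin> B \<longrightarrow> k \<noteq> - of_nat n \<longrightarrow>
      (\<forall>(a :: nat \<Rightarrow> 'd::finite \<Rightarrow> complex) \<psi> \<xi>. screening_data n k a \<psi> \<xi> \<longrightarrow>
        (let H = hvec n k a \<psi> \<xi>; HH = fld_quad H H; dH = fld_deriv H;
             T = Tfield n k a \<psi> \<xi> in
          {X \<in> weight2_fields. (\<forall>i\<in>{1..n-1}. commutes_screening (a i) X) \<and> commutes_screening \<psi> X}
            = {fld_add (fld_add (fld_scale c1 HH) (fld_scale c2 dH)) (fld_scale c3 T) | c1 c2 c3. True}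
          \<and> (\<forall>c1 c2 c3. fld_add (fld_add (fld_scale c1 HH) (fld_scale c2 dH)) (fld_scale c3 T) = fld_zero
               \<longrightarrow> c1 = 0 \<and> c2 = 0 \<and> c3 = 0)
          \<and> is_virasoro T (central_charge n k))))"
proof (intro exI[of _ "{}"] conjI allI impI)
  fix k :: complex and a :: "nat \<Rightarrow> 'd \<Rightarrow> complex" and \<psi> \<xi>
  assume "k \<noteq> - of_nat n" and "screening_data n k a \<psi> \<xi>"
  then interpret screening_setup n k a \<psi> \<xi> "k + of_nat n"
    using assms by unfold_locales (auto simp: eq_neg_iff_add_eq_0)
  have screenings: "(\<forall>i\<in>{1..n-1}. commutes_screening (a i) X) \<and> commutes_screening \<psi> X
      \<longleftrightarrow> (\<forall>i<n. commutes_screening (chain i) X)" for X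
    by (fact screenings_eq_chain[where P = "\<lambda>\<alpha>. commutes_screening \<alpha> X"])
  show "let H = hvec n k a \<psi> \<xi>; HH = fld_quad H H; dH = fld_deriv H; T = Tfield n k a \<psi> \<xi> in
          {X \<in> weight2_fields. (\<forall>i\<in>{1..n-1}. commutes_screening (a i) X) \<and> commutes_screening \<psi> X}
            = {fld_add (fld_add (fld_scale c1 HH) (fld_scale c2 dH)) (fld_scale c3 T) | c1 c2 c3. True}
          \<and> (\<forall>c1 c2 c3. fld_add (fld_add (fld_scale c1 HH) (fld_scale c2 dH)) (fld_scale c3 T) = fld_zero
               \<longrightarrow> c1 = 0 \<and> c2 = 0 \<and> c3 = 0)
          \<and> is_virasoro T (central_charge n k)"
    unfolding Let_def screenings Tfield_eq fld_combination_eq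
    using commuting_fields_eq_span combination_eq_zero Tfield_is_virasoro[unfolded Tfield_eq]
    by blast
qed simp

end
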